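(* Let $\mathcal F$ be a left $\mathcal D$-module. Then the pairing $\langle\sum_{u\in M}A_ux^{-u},\sum_{u\in M}B_ux^u\rangle=\sum_uB_uA_u$ induces an isomorphism $\mathcal K(\mathcal F)\cong\mathrm{Hom}_{\mathcal D}(\mathcal W,\mathcal F)$.
   Context: Let $A=\{\mathbf a_1,\dots,\mathbf a_m\}\subseteq\mathbb Z^n$ be linearly independent over $\mathbb R$, $\mathbf a_0\in\mathbb Z^n$, and $\ell_0,\dots,\ell_m$ positive integers with gcd $1$, $\ell_0\mathbf a_0=\sum_{j=1}^m\ell_j\mathbf a_j$, $\ell_0=\sum_{j=1}^m\ell_j$. Write $\mathbf a_j=(a_{1j},\dots,a_{nj})$ for $j=0,\dots,m$. Let $f_\lambda=\sum_{j=1}^m\ell_jx^{\mathbf a_j}-\ell_0\lambda x^{\mathbf a_0}$. Let $V$ be the real span of $A$, $V_{\mathbb Z}=V\cap\mathbb Z^n$, $C(A)$ the real cone generated by $A$, $M=V_{\mathbb Z}\cap C(A)$. Let $S$ be the $\mathbb C[\lambda]$-span of $\{x^u:u\in M\}$, $D_i=x_i\partial/\partial x_i+x_i\partial f_\lambda/\partial x_i$ ($i=1,\dots,n$), $D_\lambda=\partial/\partial\lambda-\ell_0x^{\mathbf a_0}$, $\mathcal D=\mathbb C[\lambda]\langle\partial_\lambda\rangle$, and $\mathcal W=S/\sum_iD_iS$, a left $\mathcal D$-module with $\partial_\lambda$ acting as $D_\lambda$. For a left $\mathcal D$-module $\mathcal F$, let $R(\mathcal F)$ be the set of formal sums $\xi=\sum_{u\in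 M}A_ux^{-u}$ with $A_u\in\mathcal F$, and define $D_i^*(\xi)=\sum_{v\in M}\big(v_iA_v-\ell_0a_{i0}\lambda A_{v+\mathbf a_0}+\sum_{j=1}^m\ell_ja_{ij}A_{v+\mathbf a_j}\big)x^{-v}$ (this is $\gamma_-\circ(-x_i\partial/\partial x_i-\ell_0a_{i0}\lambda x^{\mathbf a_0}+\sum_j\ell_ja_{ij}x^{\mathbf a_j})$, where $\gamma_-$ discards monomials $x^{-u}$ with $u\notin M$). Let $\mathcal K(\mathcal F)$ be the set of $\xi=\sum_{u\in M}A_ux^{-u}\in R(\mathcal F)$ with $D_i^*(\xi)=0$ for $i=1,\dots,n$ and $\partial_\lambda(A_u)=-\ell_0A_{u+\mathbf a_0}$ for all $u\in M$. *)

theory Defs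
  imports "HOL-Analysis.Analysis" "HOL-Computational_Algebra.Polynomial"
begin

text \<open>Exponent vectors u in Z^n are elements of int^'n; the data are
  m, a :: nat => int^'n (a 0 = a_0, a 1, ..., a m = the elements of A) and
  l :: nat => nat (l 0 = ell_0, ..., l m = ell_m).  The coordinate a_{ij} is a j $ i.\<close>

definition rvec :: "int ^ 'n \<Rightarrow> real ^ 'n" where
  "rvec u = (\<chi> i. real_of_int (u $ i))"

definition VA :: "nat \<Rightarrow> (nat \<Rightarrow> int ^ 'n) \<Rightarrow> (real ^ 'n) set" where
  "VA m a = span ((\<lambda>j. rvec (a j)) ` {1..m})"

definition CA :: "nat \<Rightarrow> (nat \<Rightarrow> int ^ 'n) \<Rightarrow> (real ^ 'n) set" where
  "CA m a = {(\<Sum>j\<in>{1..m}. c j *\<^sub>R rvec (a j)) | c. \<forall>j\<in>{1..m}. 0 \<le> c j}"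

definition MA :: "nat \<Rightarrow> (nat \<Rightarrow> int ^ 'n) \<Rightarrow> (int ^ 'n) set" where
  "MA m a = {u. rvec u \<in> VA m a} \<inter> {u. rvec u \<in> CA m a}"

text \<open>S: an element sum_u s_u x^u is represented by its coefficient function
  s :: int^'n => complex poly, finitely supported with support in M.\<close>
definition SA :: "nat \<Rightarrow> (nat \<Rightarrow> int ^ 'n) \<Rightarrow> (int ^ 'n \<Rightarrow> complex poly) set" where
  "SA m a = {s. finite {u. s u \<noteq> 0} \<and> (\<forall>u. s u \<noteq> 0 \<longrightarrow> u \<in> MA m a)}"

definition lam :: "complex poly" where
  "lam = [:0, 1:]"

text \<open>D_i = x_i d/dx_i + x_i df_lambda/dx_i acting on S (coefficient of x^v of D_i(s))\<close>
definition Dop :: "nat \<Rightarrow> (nat \<Rightarrow> int ^ 'n) \<Rightarrow> (nat \<Rightarrow> nat) \<Rightarrow> 'n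
    \<Rightarrow> (int ^ 'n \<Rightarrow> complex poly) \<Rightarrow> (int ^ 'n \<Rightarrow> complex poly)" where
  "Dop m a l i s = (\<lambda>v. of_int (v $ i) * s v
      + (\<Sum>j\<in>{1..m}. of_int (int (l j) * (a j $ i)) * s (v - a j))
      - of_int (int (l 0) * (a 0 $ i)) * lam * s (v - a 0))"

text \<open>D_lambda = d/d lambda - ell_0 x^{a_0} acting on S\<close>
definition Dlam :: "(nat \<Rightarrow> int ^ 'n) \<Rightarrow> (nat \<Rightarrow> nat)
    \<Rightarrow> (int ^ 'n \<Rightarrow> complex poly) \<Rightarrow> (int ^ 'n \<Rightarrow> complex poly)" where
  "Dlam a l s = (\<lambda>v. pderiv (s v) - of_nat (l 0) * s (v - a 0))"

text \<open>A left D-module, D = C[lambda]<d_lambda>: a C[lambda]-module (action act)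
  with an additive operator P (action of d_lambda) satisfying
  d_lambda g = g d_lambda + g'.\<close>
definition left_D_module :: "(complex poly \<Rightarrow> 'f::ab_group_add \<Rightarrow> 'f) \<Rightarrow> ('f \<Rightarrow> 'f) \<Rightarrow> bool" where
  "left_D_module act P \<longleftrightarrow> module act \<and> (\<forall>x y. P (x + y) = P x + P y)
     \<and> (\<forall>g x. P (act g x) = act (pderiv g) x + act g (P x))"

text \<open>Elements of R(F): xi = sum_{u in M} A_u x^{-u}, represented by u |-> A_u (zero off M).
  D_i^*(xi), coefficient of x^{-v} for v in M:\<close>
definition Dstar :: "nat \<Rightarrow> (nat \<Rightarrow> int ^ 'n) \<Rightarrow> (nat \<Rightarrow> nat)
    \<Rightarrow> (complex poly \<Rightarrow> 'f::ab_group_add \<Rightarrow> 'f) \<Rightarrow> 'n \<Rightarrow> (int ^ 'n \<Rightarrow> 'f) \<Rightarrow> int ^ 'n \<Rightarrow> 'f" where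
  "Dstar m a l act i xi v = act (of_int (v $ i)) (xi v)
      - act (of_int (int (l 0) * (a 0 $ i)) * lam) (xi (v + a 0))
      + (\<Sum>j\<in>{1..m}. act (of_int (int (l j) * (a j $ i))) (xi (v + a j)))"

definition KF :: "nat \<Rightarrow> (nat \<Rightarrow> int ^ 'n) \<Rightarrow> (nat \<Rightarrow> nat)
    \<Rightarrow> (complex poly \<Rightarrow> 'f::ab_group_add \<Rightarrow> 'f) \<Rightarrow> ('f \<Rightarrow> 'f) \<Rightarrow> (int ^ 'n \<Rightarrow> 'f) set" where
  "KF m a l act P = {xi. (\<forall>u. u \<notin> MA m a \<longrightarrow> xi u = 0)
      \<and> (\<forall>i. \<forall>v\<in>MA m a. Dstar m a l act i xi v = 0)
      \<and> (\<forall>u\<in>MA m a. P (xi u) = - act (of_nat (l 0)) (xi (u + a 0)))}"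

definition pairing :: "(complex poly \<Rightarrow> 'f::ab_group_add \<Rightarrow> 'f)
    \<Rightarrow> (int ^ 'n \<Rightarrow> 'f) \<Rightarrow> (int ^ 'n \<Rightarrow> complex poly) \<Rightarrow> 'f" where
  "pairing act xi s = (\<Sum>u\<in>{u. s u \<noteq> 0}. act (s u) (xi u))"

text \<open>Hom_D(W, F) with W = S / sum_i D_i S: a D-linear map W -> F is the same as a
  map phi on S that is additive, C[lambda]-linear, intertwines D_lambda with d_lambda,
  and vanishes on sum_i D_i S.\<close>
definition HomDW :: "nat \<Rightarrow> (nat \<Rightarrow> int ^ 'n) \<Rightarrow> (nat \<Rightarrow> nat)
    \<Rightarrow> (complex poly \<Rightarrow> 'f::ab_group_add \<Rightarrow> 'f) \<Rightarrow> ('f \<Rightarrow> 'f)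
    \<Rightarrow> ((int ^ 'n \<Rightarrow> complex poly) \<Rightarrow> 'f) \<Rightarrow> bool" where
  "HomDW m a l act P phi \<longleftrightarrow>
      (\<forall>s\<in>SA m a. \<forall>t\<in>SA m a. phi (\<lambda>v. s v + t v) = phi s + phi t)
    \<and> (\<forall>g. \<forall>s\<in>SA m a. phi (\<lambda>v. g * s v) = act g (phi s))
    \<and> (\<forall>s\<in>SA m a. phi (Dlam a l s) = P (phi s))
    \<and> (\<forall>i. \<forall>s\<in>SA m a. phi (Dop m a l i s) = 0)"

end

theory Submission
  imports Defs
begin

text \<open>The monomials x^u, u in M, form a C[lambda]-basis of S, so a C[lambda]-linear map phi
  on S is the pairing with the series whose coefficient at u is phi(x^u).  Under the pairing
  D_i is adjoint to D_i^*, so phi kills the D_i S exactly when the series is annihilated by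
  the D_i^*; and comparing D_lambda = d/d lambda - l_0 x^(a_0) with the Leibniz rule of the
  D-module F shows that phi intertwines D_lambda with d_lambda exactly when
  d_lambda A_u = - l_0 A_(u + a_0).  Testing these conditions on monomials requires the
  operators to preserve S, i.e. the monoid M must contain a_0, ..., a_m; for a_0 this is
  where l_0 > 0 and the linear relation enter.\<close>

lemma rvec_add: "rvec (u + v) = rvec u + rvec v"
  by (simp add: rvec_def vec_eq_iff)

lemma cone_subset_span: "CA m a \<subseteq> VA m a"
  unfolding CA_def VA_def by (auto intro!: span_sum span_scale intro: span_base)

lemma cone_add:
  assumes "x \<in> CA m a" and "y \<in> CA m a"
  shows "x + y \<in> CA m a"
proof -
  obtain c d where "x = (\<Sum>j\<in>{1..m}. c j *\<^sub>R rvec (a j))" "\<forall>j\<in>{1..m}. 0 \<le> c j"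
    and "y = (\<Sum>j\<in>{1..m}. d j *\<^sub>R rvec (a j))" "\<forall>j\<in>{1..m}. 0 \<le> d j"
    using assms unfolding CA_def by auto
  then show ?thesis
    unfolding CA_def
    by (intro CollectI exI[of _ "\<lambda>j. c j + d j"]) (auto simp: sum.distrib scaleR_add_left)
qed

lemma mem_MA_iff_cone: "u \<in> MA m a \<longleftrightarrow> rvec u \<in> CA m a"
  unfolding MA_def using cone_subset_span by blast

lemma MA_add: "u \<in> MA m a \<Longrightarrow> v \<in> MA m a \<Longrightarrow> u + v \<in> MA m a"
  by (simp add: mem_MA_iff_cone rvec_add cone_add)

lemma mem_MA_nonneg_comb:
  assumes "rvec u = (\<Sum>j\<in>{1..m}. c j *\<^sub>R rvec (a j))" and "\<forall>j\<in>{1..m}. 0 \<le> c j"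
  shows "u \<in> MA m a"
  unfolding mem_MA_iff_cone CA_def using assms by blast

lemma generator_mem_MA:
  assumes "j \<in> {1..m}"
  shows "a j \<in> MA m a"
proof (rule mem_MA_nonneg_comb)
  show "rvec (a j) = (\<Sum>k\<in>{1..m}. (if k = j then 1 else 0) *\<^sub>R rvec (a k))"
    using assms by (simp add: if_distrib[of "\<lambda>c. c *\<^sub>R _"] sum.delta cong: if_cong)
qed simp

lemma a0_mem_MA:
  assumes "0 < l 0"
    and rel: "\<forall>i. int (l 0) * (a 0 $ i) = (\<Sum>j\<in>{1..m}. int (l j) * (a j $ i))"
  shows "a 0 \<in> MA m a"
proof (rule mem_MA_nonneg_comb)
  have "real (l 0) * real_of_int (a 0 $ i) = (\<Sum>j\<in>{1..m}. real (l j) * real_of_int (a j $ i))"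
    for i
    using arg_cong[OF rel[rule_format, of i], of real_of_int] by simp
  with \<open>0 < l 0\<close> show "rvec (a 0) = (\<Sum>j\<in>{1..m}. (real (l j) / real (l 0)) *\<^sub>R rvec (a j))"
    by (simp add: vec_eq_iff rvec_def sum_component sum_divide_distrib[symmetric] field_simps)
qed simp

lemma finite_support_add:
  fixes f g :: "'a \<Rightarrow> 'b::monoid_add"
  shows "finite {x. f x \<noteq> 0} \<Longrightarrow> finite {x. g x \<noteq> 0} \<Longrightarrow> finite {x. f x + g x \<noteq> 0}"
  by (rule finite_subset[of _ "{x. f x \<noteq> 0} \<union> {x. g x \<noteq> 0}"]) auto

lemma finite_support_sum:
  fixes f :: "'j \<Rightarrow> 'a \<Rightarrow> 'b::comm_monoid_add"
  assumes "finite J" and "\<forall>j\<in>J. finite {x. f j x \<noteq> 0}"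
  shows "finite {x. (\<Sum>j\<in>J. f j x) \<noteq> 0}"
proof (rule finite_subset)
  show "{x. (\<Sum>j\<in>J. f j x) \<noteq> 0} \<subseteq> (\<Union>j\<in>J. {x. f j x \<noteq> 0})"
    by (auto intro: sum.neutral)
qed (use assms in auto)

lemma finite_support_mult:
  fixes s :: "'a \<Rightarrow> 'b::mult_zero"
  shows "finite {x. s x \<noteq> 0} \<Longrightarrow> finite {x. c x * s x \<noteq> 0}"
  by (rule finite_subset[of _ "{x. s x \<noteq> 0}"]) auto

lemma finite_support_comp:
  "f 0 = 0 \<Longrightarrow> finite {x. s x \<noteq> 0} \<Longrightarrow> finite {x. f (s x) \<noteq> 0}"
  by (rule finite_subset[of _ "{x. s x \<noteq> 0}"]) auto

lemma support_shift:
  fixes s :: "'a::group_add \<Rightarrow> 'b::zero"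
  shows "{x. s (x - b) \<noteq> 0} = (\<lambda>u. u + b) ` {u. s u \<noteq> 0}"
  by (auto simp: image_iff) (metis diff_add_cancel)

lemma finite_support_shift:
  fixes s :: "'a::group_add \<Rightarrow> 'b::zero"
  shows "finite {x. s x \<noteq> 0} \<Longrightarrow> finite {x. s (x - b) \<noteq> 0}"
  by (simp add: support_shift)

definition xpow :: "int ^ 'n \<Rightarrow> int ^ 'n \<Rightarrow> complex poly" where
  "xpow u = (\<lambda>v. if v = u then 1 else 0)"

lemma support_xpow [simp]: "{v. xpow u v \<noteq> 0} = {u}"
  by (auto simp: xpow_def)

lemma pairing_eq_sum_superset:
  assumes "module act" and "finite F" and "{u. s u \<noteq> 0} \<subseteq> F"
  shows "pairing act xi s = (\<Sum>u\<in>F. act (s u) (xi u))"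
proof -
  interpret module act by fact
  show ?thesis
    unfolding pairing_def by (rule sum.mono_neutral_left) (use assms in auto)
qed

lemma pairing_zero_right: "pairing act xi (\<lambda>v. 0) = 0"
  unfolding pairing_def by simp

lemma pairing_cong:
  "(\<And>u. s u \<noteq> 0 \<Longrightarrow> xi u = eta u) \<Longrightarrow> pairing act xi s = pairing act eta s"
  unfolding pairing_def by (rule sum.cong) auto

lemma pairing_shift_right:
  "pairing act xi (\<lambda>v. s (v - b)) = pairing act (\<lambda>u. xi (u + b)) s"
  unfolding pairing_def support_shift by (simp add: sum.reindex inj_on_def)

context
  fixes act :: "complex poly \<Rightarrow> 'f::ab_group_add \<Rightarrow> 'f"
  assumes act: "module act"
begin

interpretation module act by (rule act)

lemma pairing_add_left:
  "pairing act (\<lambda>u. xi u + eta u) s = pairing act xi s + pairing act eta s"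
  unfolding pairing_def by (simp add: scale_right_distrib sum.distrib)

lemma pairing_diff_left:
  "pairing act (\<lambda>u. xi u - eta u) s = pairing act xi s - pairing act eta s"
  unfolding pairing_def by (simp add: scale_right_diff_distrib sum_subtractf)

lemma pairing_sum_left:
  "pairing act (\<lambda>u. \<Sum>j\<in>J. xi j u) s = (\<Sum>j\<in>J. pairing act (xi j) s)"
  unfolding pairing_def by (simp add: scale_sum_right sum.swap[of _ J])

lemma pairing_scale_left:
  "pairing act (\<lambda>u. act g (xi u)) s = act g (pairing act xi s)"
  unfolding pairing_def by (simp add: scale_sum_right mult.commute)

lemma pairing_xpow: "pairing act xi (xpow u) = xi u"
  unfolding pairing_def by (simp add: xpow_def)

lemma pairing_minus_left: "pairing act (\<lambda>u. - xi u) s = - pairing act xi s"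
  unfolding pairing_def by (simp add: sum_negf)

lemma pairing_zero_left: "pairing act (\<lambda>u. 0) s = 0"
  unfolding pairing_def by simp

lemma pairing_add_right:
  assumes "finite {u. s u \<noteq> 0}" and "finite {u. t u \<noteq> 0}"
  shows "pairing act xi (\<lambda>v. s v + t v) = pairing act xi s + pairing act xi t"
proof -
  let ?F = "{u. s u \<noteq> 0} \<union> {u. t u \<noteq> 0}"
  have fin: "finite ?F" using assms by simp
  have "pairing act xi (\<lambda>v. s v + t v) = (\<Sum>u\<in>?F. act (s u + t u) (xi u))"
    by (rule pairing_eq_sum_superset[OF act fin]) auto
  then show ?thesis
    by (simp add: pairing_eq_sum_superset[OF act fin] scale_left_distrib sum.distrib)
qed

lemma pairing_diff_right:
  assumes "finite {u. s u \<noteq> 0}" and "finite {u. t u \<noteq> 0}"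
  shows "pairing act xi (\<lambda>v. s v - t v) = pairing act xi s - pairing act xi t"
proof -
  let ?F = "{u. s u \<noteq> 0} \<union> {u. t u \<noteq> 0}"
  have fin: "finite ?F" using assms by simp
  have "pairing act xi (\<lambda>v. s v - t v) = (\<Sum>u\<in>?F. act (s u - t u) (xi u))"
    by (rule pairing_eq_sum_superset[OF act fin]) auto
  then show ?thesis
    by (simp add: pairing_eq_sum_superset[OF act fin] scale_left_diff_distrib sum_subtractf)
qed

lemma pairing_sum_right:
  assumes "finite J" and "\<forall>j\<in>J. finite {u. s j u \<noteq> 0}"
  shows "pairing act xi (\<lambda>v. \<Sum>j\<in>J. s j v) = (\<Sum>j\<in>J. pairing act xi (s j))"
  using assms
proof (induction J rule: finite_induct)
  case empty
  then show ?case by (simp add: pairing_zero_right)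
next
  case (insert j J)
  then show ?case
    by (simp add: pairing_add_right finite_support_sum)
qed

lemma pairing_mult_right:
  assumes "finite {u. s u \<noteq> 0}"
  shows "pairing act xi (\<lambda>v. c v * s v) = pairing act (\<lambda>u. act (c u) (xi u)) s"
proof -
  have "pairing act xi (\<lambda>v. c v * s v) = (\<Sum>u\<in>{u. s u \<noteq> 0}. act (c u * s u) (xi u))"
    by (rule pairing_eq_sum_superset[OF act assms]) auto
  then show ?thesis by (simp add: pairing_def mult.commute)
qed

lemma pairing_mult_shift_right:
  assumes "finite {u. s u \<noteq> 0}"
  shows "pairing act xi (\<lambda>v. c * s (v - b)) = pairing act (\<lambda>u. act c (xi (u + b))) s"
proof -
  have "pairing act xi (\<lambda>v. c * s (v - b)) = pairing act (\<lambda>u. act c (xi u)) (\<lambda>v. s (v - b))"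
    by (rule pairing_mult_right[where c = "\<lambda>_. c"]) (rule finite_support_shift[OF assms])
  also have "\<dots> = pairing act (\<lambda>u. act c (xi (u + b))) s"
    by (rule pairing_shift_right)
  finally show ?thesis .
qed

lemma pairing_Dop:
  assumes "finite {u. s u \<noteq> 0}"
  shows "pairing act xi (Dop m a l i s) = pairing act (Dstar m a l act i xi) s"
proof -
  let ?c = "\<lambda>j. of_int (int (l j) * (a j $ i)) :: complex poly"
  have shifted: "finite {v. s (v - b) \<noteq> 0}" for b
    by (rule finite_support_shift[OF assms])
  have "pairing act xi (Dop m a l i s)
      = pairing act xi (\<lambda>v. of_int (v $ i) * s v)
        + (\<Sum>j\<in>{1..m}. pairing act xi (\<lambda>v. ?c j * s (v - a j)))
        - pairing act xi (\<lambda>v. (?c 0 * lam) * s (v - a 0))"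
    unfolding Dop_def using assms shifted
    by (simp add: pairing_diff_right pairing_add_right pairing_sum_right
        finite_support_add finite_support_sum finite_support_mult)
  also have "\<dots> = pairing act (\<lambda>u. act (of_int (u $ i)) (xi u)) s
        + (\<Sum>j\<in>{1..m}. pairing act (\<lambda>u. act (?c j) (xi (u + a j))) s)
        - pairing act (\<lambda>u. act (?c 0 * lam) (xi (u + a 0))) s"
    using assms by (simp add: pairing_mult_right pairing_mult_shift_right)
  also have "\<dots> = pairing act (Dstar m a l act i xi) s"
    unfolding Dstar_def by (simp add: pairing_add_left pairing_diff_left pairing_sum_left)
  finally show ?thesis .
qed

lemma pairing_Dlam:
  assumes "finite {u. s u \<noteq> 0}"
  shows "pairing act xi (Dlam a l s)
    = pairing act xi (\<lambda>v. pderiv (s v)) - pairing act (\<lambda>u. act (of_nat (l 0)) (xi (u + a 0))) s"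
  unfolding Dlam_def using assms
  by (simp add: pairing_diff_right pairing_mult_shift_right finite_support_comp
      finite_support_mult finite_support_shift)

end

lemma pairing_Leibniz:
  assumes "left_D_module act P" and fin: "finite {u. s u \<noteq> 0}"
  shows "P (pairing act xi s) = pairing act xi (\<lambda>v. pderiv (s v)) + pairing act (\<lambda>u. P (xi u)) s"
proof -
  have act: "module act" and "Modules.additive P"
    and Leibniz: "\<And>g x. P (act g x) = act (pderiv g) x + act g (P x)"
    using assms(1) unfolding left_D_module_def Modules.additive_def by auto
  interpret P: Modules.additive P by fact
  have "pairing act xi (\<lambda>v. pderiv (s v)) = (\<Sum>u\<in>{u. s u \<noteq> 0}. act (pderiv (s u)) (xi u))"
    by (rule pairing_eq_sum_superset[OF act fin]) auto
  moreover have "P (pairing act xi s)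
      = (\<Sum>u\<in>{u. s u \<noteq> 0}. act (pderiv (s u)) (xi u)) + pairing act (\<lambda>u. P (xi u)) s"
    unfolding pairing_def by (simp add: P.sum Leibniz sum.distrib)
  ultimately show ?thesis by simp
qed

lemma SA_add: "s \<in> SA m a \<Longrightarrow> t \<in> SA m a \<Longrightarrow> (\<lambda>v. s v + t v) \<in> SA m a"
  unfolding SA_def by (auto intro: finite_support_add) (metis add.left_neutral)

lemma SA_mult: "s \<in> SA m a \<Longrightarrow> (\<lambda>v. c v * s v) \<in> SA m a"
  unfolding SA_def by (auto intro: finite_support_mult)

lemma xpow_mem_SA: "u \<in> MA m a \<Longrightarrow> xpow u \<in> SA m a"
  unfolding SA_def by (simp add: xpow_def)

lemma SA_if_support_in_shifts:
  assumes s: "s \<in> SA m a" and "finite J" and b: "\<forall>j\<in>J. b j \<in> MA m a"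
    and t: "\<And>v. s v = 0 \<Longrightarrow> \<forall>j\<in>J. s (v - b j) = 0 \<Longrightarrow> t v = 0"
  shows "t \<in> SA m a"
proof -
  have supp: "{v. t v \<noteq> 0} \<subseteq> {v. s v \<noteq> 0} \<union> (\<Union>j\<in>J. {v. s (v - b j) \<noteq> 0})"
    using t by blast
  have "finite {v. s v \<noteq> 0}" and sM: "\<And>v. s v \<noteq> 0 \<Longrightarrow> v \<in> MA m a"
    using s by (auto simp: SA_def)
  then have "finite {v. t v \<noteq> 0}"
    using \<open>finite J\<close> by (auto intro: finite_subset[OF supp] finite_support_shift)
  moreover have "v \<in> MA m a" if "s (v - b j) \<noteq> 0" "j \<in> J" for v j
    using MA_add[OF sM[OF that(1)] b[rule_format, OF that(2)]] by simp
  ultimately show ?thesis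
    unfolding SA_def using supp sM by blast
qed

lemma Dop_mem_SA:
  "s \<in> SA m a \<Longrightarrow> \<forall>j\<in>{0..m}. a j \<in> MA m a \<Longrightarrow> Dop m a l i s \<in> SA m a"
  by (erule SA_if_support_in_shifts[where J = "{0..m}" and b = a]) (auto simp: Dop_def)

lemma Dlam_mem_SA: "s \<in> SA m a \<Longrightarrow> a 0 \<in> MA m a \<Longrightarrow> Dlam a l s \<in> SA m a"
  by (erule SA_if_support_in_shifts[where J = "{0}" and b = a]) (auto simp: Dlam_def)

definition series_of_hom ::
    "nat \<Rightarrow> (nat \<Rightarrow> int ^ 'n) \<Rightarrow> ((int ^ 'n \<Rightarrow> complex poly) \<Rightarrow> 'f::zero) \<Rightarrow> int ^ 'n \<Rightarrow> 'f" where
  "series_of_hom m a phi u = (if u \<in> MA m a then phi (xpow u) else 0)"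

lemma hom_eq_pairing_series_of_hom:
  fixes phi :: "(int ^ 'n \<Rightarrow> complex poly) \<Rightarrow> 'f::ab_group_add"
  assumes add: "\<forall>s\<in>SA m a. \<forall>t\<in>SA m a. phi (\<lambda>v. s v + t v) = phi s + phi t"
    and lin: "\<forall>g. \<forall>s\<in>SA m a. phi (\<lambda>v. g * s v) = act g (phi s)"
    and s: "s \<in> SA m a"
  shows "phi s = pairing act (series_of_hom m a phi) s"
proof -
  have phi0: "phi (\<lambda>v. 0) = 0"
  proof -
    have zero: "(\<lambda>v. 0) \<in> SA m a" by (simp add: SA_def)
    from add[rule_format, OF zero zero] show ?thesis by simp
  qed
  have comb: "(\<lambda>v. \<Sum>u\<in>F. c u * xpow u v) \<in> SA m a
      \<and> phi (\<lambda>v. \<Sum>u\<in>F. c u * xpow u v) = (\<Sum>u\<in>F. act (c u) (phi (xpow u)))"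
    if "finite F" and "F \<subseteq> MA m a" for F c
    using that
  proof (induction F rule: finite_induct)
    case empty
    show ?case using phi0 by (simp add: SA_def)
  next
    case (insert x F)
    then have "xpow x \<in> SA m a" by (simp add: xpow_mem_SA)
    with insert show ?case by (simp add: SA_add SA_mult add lin)
  qed
  have fin: "finite {u. s u \<noteq> 0}" and sM: "{u. s u \<noteq> 0} \<subseteq> MA m a"
    using s by (auto simp: SA_def)
  have "s = (\<lambda>v. \<Sum>u\<in>{u. s u \<noteq> 0}. s u * xpow u v)"
  proof
    fix v
    have "(\<Sum>u\<in>{u. s u \<noteq> 0}. s u * xpow u v) = (\<Sum>u\<in>{u. s u \<noteq> 0}. if u = v then s v else 0)"
      by (rule sum.cong) (auto simp: xpow_def)
    with fin show "s v = (\<Sum>u\<in>{u. s u \<noteq> 0}. s u * xpow u v)"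
      by simp
  qed
  then have "phi s = phi (\<lambda>v. \<Sum>u\<in>{u. s u \<noteq> 0}. s u * xpow u v)"
    by (rule arg_cong)
  also have "\<dots> = (\<Sum>u\<in>{u. s u \<noteq> 0}. act (s u) (phi (xpow u)))"
    using comb[OF fin sM] by blast
  also have "\<dots> = pairing act (series_of_hom m a phi) s"
    unfolding pairing_def series_of_hom_def using sM by (intro sum.cong) auto
  finally show ?thesis .
qed

lemma series_of_hom_mem_KF:
  assumes act: "module act" and hom: "HomDW m a l act P phi"
    and aM: "\<forall>j\<in>{0..m}. a j \<in> MA m a"
  shows "series_of_hom m a phi \<in> KF m a l act P"
proof -
  let ?xi = "series_of_hom m a phi"
  have agree: "pairing act ?xi s = phi s" if "s \<in> SA m a" for s
    using hom_eq_pairing_series_of_hom[of m a phi act s] hom that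
    unfolding HomDW_def by auto
  have "Dstar m a l act i ?xi v = 0" if v: "v \<in> MA m a" for i v
  proof -
    have "Dstar m a l act i ?xi v = pairing act ?xi (Dop m a l i (xpow v))"
      by (simp add: pairing_Dop[OF act] pairing_xpow[OF act])
    also have "\<dots> = phi (Dop m a l i (xpow v))"
      by (rule agree[OF Dop_mem_SA[OF xpow_mem_SA[OF v] aM]])
    also have "\<dots> = 0"
      using hom xpow_mem_SA[OF v] unfolding HomDW_def by blast
    finally show ?thesis .
  qed
  moreover have "P (?xi u) = - act (of_nat (l 0)) (?xi (u + a 0))" if u: "u \<in> MA m a" for u
  proof -
    have "(\<lambda>v. pderiv (xpow u v)) = (\<lambda>v. 0)"
      by (simp add: fun_eq_iff xpow_def)
    then have "pairing act ?xi (Dlam a l (xpow u)) = - act (of_nat (l 0)) (?xi (u + a 0))"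
      by (simp add: pairing_Dlam[OF act] pairing_xpow[OF act] pairing_zero_right)
    moreover have "pairing act ?xi (Dlam a l (xpow u)) = phi (Dlam a l (xpow u))"
      using aM by (intro agree Dlam_mem_SA xpow_mem_SA u) auto
    moreover have "phi (Dlam a l (xpow u)) = P (?xi u)"
      using hom xpow_mem_SA[OF u] u unfolding HomDW_def series_of_hom_def by simp
    ultimately show ?thesis by simp
  qed
  ultimately show ?thesis
    unfolding KF_def by (auto simp: series_of_hom_def)
qed

lemma KF_eqI:
  assumes act: "module act" and "xi \<in> KF m a l act P" and "eta \<in> KF m a l act P"
    and pairings: "\<forall>s\<in>SA m a. pairing act xi s = pairing act eta s"
  shows "xi = eta"
proof
  fix u
  show "xi u = eta u"
  proof (cases "u \<in> MA m a")
    case True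
    then show ?thesis
      using pairings xpow_mem_SA pairing_xpow[OF act] by metis
  next
    case False
    then show ?thesis using assms(2,3) unfolding KF_def by simp
  qed
qed

lemma pairing_mem_HomDW:
  assumes D: "left_D_module act P" and xi: "xi \<in> KF m a l act P"
  shows "HomDW m a l act P (pairing act xi)"
proof -
  have act: "module act" using D by (simp add: left_D_module_def)
  have fin: "finite {u. s u \<noteq> 0}" and sM: "\<And>u. s u \<noteq> 0 \<Longrightarrow> u \<in> MA m a"
    if "s \<in> SA m a" for s
    using that by (auto simp: SA_def)
  have xiP: "\<And>u. u \<in> MA m a \<Longrightarrow> P (xi u) = - act (of_nat (l 0)) (xi (u + a 0))"
    and xiD: "\<And>i v. v \<in> MA m a \<Longrightarrow> Dstar m a l act i xi v = 0"
    using xi unfolding KF_def by auto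
  have "pairing act xi (Dlam a l s) = P (pairing act xi s)" if s: "s \<in> SA m a" for s
  proof -
    have "pairing act (\<lambda>u. P (xi u)) s
        = pairing act (\<lambda>u. - act (of_nat (l 0)) (xi (u + a 0))) s"
      by (rule pairing_cong) (simp add: xiP sM[OF s])
    then show ?thesis
      by (simp add: pairing_Dlam[OF act fin[OF s]] pairing_Leibniz[OF D fin[OF s]]
          pairing_minus_left[OF act])
  qed
  moreover have "pairing act xi (Dop m a l i s) = 0" if s: "s \<in> SA m a" for i s
  proof -
    have "pairing act (Dstar m a l act i xi) s = pairing act (\<lambda>u. 0) s"
      by (rule pairing_cong) (simp add: xiD sM[OF s])
    then show ?thesis
      by (simp add: pairing_Dop[OF act fin[OF s]] pairing_zero_left[OF act])
  qed
  ultimately show ?thesis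
    unfolding HomDW_def
    by (simp add: fin pairing_add_right[OF act] pairing_mult_right[OF act]
        pairing_scale_left[OF act])
qed

theorem proposition2p6:
  fixes m :: nat and a :: "nat \<Rightarrow> int ^ 'n" and l :: "nat \<Rightarrow> nat"
    and act :: "complex poly \<Rightarrow> 'f::ab_group_add \<Rightarrow> 'f" and P :: "'f \<Rightarrow> 'f"
  assumes indep: "\<And>c. (\<Sum>j\<in>{1..m}. c j *\<^sub>R rvec (a j)) = 0 \<Longrightarrow> \<forall>j\<in>{1..m}. c j = 0"
    and lpos: "\<forall>j\<in>{0..m}. 0 < l j"
    and lgcd: "Gcd (l ` {0..m}) = 1"
    and rel: "\<forall>i. int (l 0) * (a 0 $ i) = (\<Sum>j\<in>{1..m}. int (l j) * (a j $ i))"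
    and lsum: "l 0 = (\<Sum>j\<in>{1..m}. l j)"
    and Dmod: "left_D_module act P"
  shows "(\<forall>xi\<in>KF m a l act P. HomDW m a l act P (pairing act xi))
    \<and> (\<forall>phi. HomDW m a l act P phi \<longrightarrow>
          (\<exists>!xi. xi \<in> KF m a l act P \<and> (\<forall>s\<in>SA m a. pairing act xi s = phi s)))
    \<and> (\<forall>(xi :: int ^ 'n \<Rightarrow> 'f) eta. \<forall>s\<in>SA m a. pairing act (\<lambda>u. xi u + eta u) s = pairing act xi s + pairing act eta s)
    \<and> (\<forall>(xi :: int ^ 'n \<Rightarrow> 'f) g. \<forall>s\<in>SA m a. pairing act (\<lambda>u. act g (xi u)) s = act g (pairing act xi s))"
proof -
  have act: "module act" using Dmod by (simp add: left_D_module_def)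
  have a0M: "a 0 \<in> MA m a"
    using lpos rel by (intro a0_mem_MA) auto
  have aM: "\<forall>j\<in>{0..m}. a j \<in> MA m a"
  proof
    fix j assume "j \<in> {0..m}"
    then show "a j \<in> MA m a"
      using a0M generator_mem_MA[of j m a] by (cases "j = 0") auto
  qed
  have "\<exists>!xi. xi \<in> KF m a l act P \<and> (\<forall>s\<in>SA m a. pairing act xi s = phi s)"
    if hom: "HomDW m a l act P phi" for phi
  proof (rule ex1I)
    let ?xi = "series_of_hom m a phi"
    have K: "?xi \<in> KF m a l act P"
      by (rule series_of_hom_mem_KF[OF act hom aM])
    have agree: "\<forall>s\<in>SA m a. pairing act ?xi s = phi s"
      using hom_eq_pairing_series_of_hom[of m a phi act] hom unfolding HomDW_def by auto
    show "?xi \<in> KF m a l act P \<and> (\<forall>s\<in>SA m a. pairing act ?xi s = phi s)"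
      using K agree by blast
    fix xi assume "xi \<in> KF m a l act P \<and> (\<forall>s\<in>SA m a. pairing act xi s = phi s)"
    then show "xi = ?xi"
      using KF_eqI[OF act _ K] agree by auto
  qed
  then show ?thesis
    using pairing_mem_HomDW[OF Dmod] pairing_add_left[OF act] pairing_scale_left[OF act]
    by blast
qed

end
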